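(* Consider ballistic deposition started from the empty configuration. There exists a constant $A>0$ such that, with probability at least $1-\varepsilon_N$ where $\sum_N\varepsilon_N<\infty$ (in the paper's words: almost surely, for all $N$ large enough), $$\max_{i\in G_N}\sigma_i(N)\le A\log N .$$
   Context: Deposition models. Fix an integer $N\ge2$ and let $G_N=\{1,\dots,N\}$. A configuration is $\sigma=(\sigma_1,\dots,\sigma_N)\in\mathbb N^N$, $\sigma_i$ being the height of column (pile) $i$; the cluster is $\bigcup_i\{i\}\times\{0,\dots,\sigma_i\}$. Given the current configuration $\sigma$, an explorer is a walk $S_n=(X_n,Z_n)$, $n\ge0$, with $(X_n)$ i.i.d. uniform on $G_N$, $Z_0=\max_i\sigma_i+1$, and for ballistic deposition $Z_{n+1}-Z_n=-1$ for all $n$ (for diffusive deposition the increments are instead i.i.d. uniform on $\{-1,+1\}$). Let $n^*=\inf\{n\ge0:Z_n\le\sigma_{X_n}\}$ and $X^*=X_{n^*}$; the explorer attaches to column $X^*$, i.e. the new configuration is $\sigma+e_{X^*}$. Explorers are sent one at a time, independently, and $\sigma(t)$ denotes the configuration after $t$ explorers, with $\sigma(0)=(0,\dots,0)$. *)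

theory Defs
  imports "HOL-Probability.Probability"
begin

text \<open>Ballistic deposition on G_N = {1..N}. A configuration is a function
  nat => nat (heights of the columns 1..N; values outside {1..N} are unused, always 0).\<close>

definition max_height :: "nat \<Rightarrow> (nat \<Rightarrow> nat) \<Rightarrow> nat" where
  "max_height N \<sigma> = Max (\<sigma> ` {1..N})"

text \<open>At height 0 it always attaches, since heights are nonnegative.\<close>
fun explore :: "nat \<Rightarrow> (nat \<Rightarrow> nat) \<Rightarrow> nat \<Rightarrow> nat pmf" where
  "explore N \<sigma> 0 = pmf_of_set {1..N}"
| "explore N \<sigma> (Suc z) =
     pmf_of_set {1..N} \<bind> (\<lambda>x. if Suc z \<le> \<sigma> x then return_pmf x else explore N \<sigma> z)"

definition deposit :: "nat \<Rightarrow> (nat \<Rightarrow> nat) \<Rightarrow> (nat \<Rightarrow> nat) pmf" where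
  "deposit N \<sigma> = map_pmf (\<lambda>x. \<sigma>(x := \<sigma> x + 1)) (explore N \<sigma> (max_height N \<sigma> + 1))"

fun config :: "nat \<Rightarrow> nat \<Rightarrow> (nat \<Rightarrow> nat) pmf" where
  "config N 0 = return_pmf (\<lambda>_. 0)"
| "config N (Suc t) = config N t \<bind> deposit N"

end

theory Submission
  imports Defs "HOL-Analysis.Harmonic_Numbers"
begin

text \<open>The explorer starts above the cluster and draws a fresh uniform column at every level,
  so it attaches to column x with probability at most (\<sigma> x + 1)/N. For the rising factorial
  f(h) = (h+1)(h+2)\<cdots>(h+k) the increment f(h+1) - f(h) is k f(h)/(h+1), hence one deposition
  multiplies the expectation of f(\<sigma> x) by at most 1 + k/N, and after N explorers it is at most
  e^k k!. Markov's inequality gives P(\<sigma> x \<ge> 9k) \<le> (e/9)^k \<le> e^-k; taking k = \<lceil>3 ln N\<rceil> and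
  a union bound over the N columns, max \<sigma>(N) > 45 ln N has probability at most 1/N^2.\<close>

text \<open>The explorer can only attach to x at one of the levels 0, \<dots>, min z (\<sigma> x), each time
  by drawing x, which has probability 1/N.\<close>
lemma pmf_explore_le:
  assumes "N \<ge> 1"
  shows "pmf (explore N \<sigma> z) x \<le> (real (min z (\<sigma> x)) + 1) / real N"
proof (induction z)
  case 0
  show ?case using assms by (simp add: indicator_def)
next
  case (Suc z)
  let ?p = "pmf (explore N \<sigma> z) x"
  have attach_le: "pmf (if Suc z \<le> \<sigma> y then return_pmf y else explore N \<sigma> z) x
      \<le> of_bool (y = x \<and> Suc z \<le> \<sigma> x) + ?p" for y
    by (auto simp: indicator_def)
  have "pmf (explore N \<sigma> (Suc z)) x
      = (\<Sum>y\<in>{1..N}. pmf (if Suc z \<le> \<sigma> y then return_pmf y else explore N \<sigma> z) x) / real N"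
    using assms by (simp add: pmf_bind_pmf_of_set)
  also have "\<dots> \<le> (\<Sum>y\<in>{1..N}. of_bool (y = x \<and> Suc z \<le> \<sigma> x) + ?p) / real N"
    by (intro divide_right_mono sum_mono attach_le) simp
  also have "\<dots> \<le> (of_bool (Suc z \<le> \<sigma> x) + real N * ?p) / real N"
    by (intro divide_right_mono) (auto simp: sum.distrib card_le_Suc0_iff_eq)
  also have "\<dots> = of_bool (Suc z \<le> \<sigma> x) / real N + ?p"
    using assms by (simp add: field_simps)
  also have "\<dots> \<le> (real (min (Suc z) (\<sigma> x)) + 1) / real N"
  proof (cases "Suc z \<le> \<sigma> x")
    case True
    then show ?thesis using Suc.IH by (simp add: min_def add_divide_distrib)
  next
    case False
    then have "\<sigma> x \<le> z" by simp
    with Suc.IH show ?thesis by (simp add: min.absorb2)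
  qed
  finally show ?case .
qed

lemma mult_pochhammer_shift:
  "a * pochhammer (a + 1) k = (a + of_nat k) * pochhammer a k"
  by (metis pochhammer_rec pochhammer_rec')

lemma pochhammer_mono:
  fixes a b :: "'a :: linordered_semidom"
  assumes "0 < a" "a \<le> b"
  shows "pochhammer a k \<le> pochhammer b k"
proof (induction k)
  case (Suc k)
  then show ?case
    using assms by (simp add: pochhammer_rec' mult_mono pochhammer_nonneg add_mono)
qed simp

lemma power_le_pochhammer:
  fixes a :: "'a :: linordered_semidom"
  assumes "0 \<le> a"
  shows "a ^ k \<le> pochhammer a k"
proof (induction k)
  case (Suc k)
  then show ?case
    using assms by (simp add: pochhammer_rec' mult_mono)
qed simp

context
  fixes f :: "nat \<Rightarrow> real" and c :: real
  assumes f_mono: "mono f" and f_nonneg: "\<And>h. 0 \<le> f h"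
    and f_drift: "\<And>h. (f (Suc h) - f h) * (real h + 1) \<le> c * f h"
    and c_nonneg: "0 \<le> c"
begin

lemma nn_integral_deposit_le:
  assumes N: "N \<ge> 1"
  shows "(\<integral>\<^sup>+\<tau>. f (\<tau> x) \<partial>deposit N \<sigma>) \<le> ennreal ((1 + c / real N) * f (\<sigma> x))"
proof -
  let ?e = "explore N \<sigma> (max_height N \<sigma> + 1)"
  define h where "h = \<sigma> x"
  define D where "D = f (Suc h) - f h"
  have D_nonneg: "0 \<le> D"
    using incseq_SucD[OF f_mono] by (simp add: D_def)
  have step: "ennreal (f (Suc h)) = ennreal (f h) + ennreal D"
    using D_nonneg f_nonneg by (simp add: D_def flip: ennreal_plus)
  have "(\<integral>\<^sup>+\<tau>. f (\<tau> x) \<partial>deposit N \<sigma>) = (\<integral>\<^sup>+y. ennreal (f h) + ennreal D * indicator {x} y \<partial>?e)"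
    using step by (auto simp: deposit_def h_def indicator_def simp del: explore.simps
        intro!: nn_integral_cong)
  also have "\<dots> = ennreal (f h) + ennreal D * pmf ?e x"
    by (subst nn_integral_add)
       (auto simp: nn_integral_cmult_indicator emeasure_pmf_single simp del: explore.simps)
  also have "\<dots> = ennreal (f h + D * pmf ?e x)"
    using D_nonneg f_nonneg by (simp add: ennreal_mult ennreal_plus)
  also have "\<dots> \<le> ennreal ((1 + c / real N) * f h)"
  proof (intro ennreal_leI)
    have attach: "pmf ?e x \<le> (real h + 1) / real N"
      using pmf_explore_le[OF N, of \<sigma> "max_height N \<sigma> + 1" x]
      by (simp add: h_def divide_right_mono order_trans)
    have "D * pmf ?e x \<le> D * (real h + 1) / real N"
      using mult_left_mono[OF attach D_nonneg] by (simp only: times_divide_eq_right)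
    also have "\<dots> \<le> c * f h / real N"
      using f_drift[of h] by (simp add: D_def divide_right_mono)
    finally show "f h + D * pmf ?e x \<le> (1 + c / real N) * f h"
      by (simp add: algebra_simps)
  qed
  finally show ?thesis by (simp add: h_def)
qed

lemma nn_integral_config_le:
  assumes N: "N \<ge> 1"
  shows "(\<integral>\<^sup>+\<tau>. f (\<tau> x) \<partial>config N t) \<le> ennreal ((1 + c / real N) ^ t * f 0)"
proof (induction t)
  case (Suc t)
  have "(\<integral>\<^sup>+\<tau>. f (\<tau> x) \<partial>config N (Suc t))
      = (\<integral>\<^sup>+\<sigma>. (\<integral>\<^sup>+\<tau>. f (\<tau> x) \<partial>deposit N \<sigma>) \<partial>config N t)"
    by simp
  also have "\<dots> \<le> (\<integral>\<^sup>+\<sigma>. ennreal ((1 + c / real N) * f (\<sigma> x)) \<partial>config N t)"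
    by (intro nn_integral_mono nn_integral_deposit_le[OF N])
  also have "\<dots> = ennreal (1 + c / real N) * (\<integral>\<^sup>+\<sigma>. f (\<sigma> x) \<partial>config N t)"
    using f_nonneg c_nonneg by (simp add: ennreal_mult nn_integral_cmult)
  also have "\<dots> \<le> ennreal (1 + c / real N) * ennreal ((1 + c / real N) ^ t * f 0)"
    using Suc.IH by (rule mult_left_mono) simp
  also have "\<dots> = ennreal ((1 + c / real N) ^ Suc t * f 0)"
    using c_nonneg f_nonneg by (subst ennreal_mult[symmetric]) (auto simp: mult.assoc)
  finally show ?case .
qed simp

lemma prob_config_tail_le:
  assumes N: "N \<ge> 1"
  shows "measure_pmf.prob (config N t) {\<tau>. h \<le> \<tau> x} * f h \<le> (1 + c / real N) ^ t * f 0"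
proof -
  let ?S = "{\<tau>::nat\<Rightarrow>nat. h \<le> \<tau> x}"
  have "ennreal (measure_pmf.prob (config N t) ?S * f h) = ennreal (f h) * emeasure (config N t) ?S"
    using f_nonneg by (simp add: measure_pmf.emeasure_eq_measure ennreal_mult mult.commute)
  also have "\<dots> = (\<integral>\<^sup>+\<tau>. ennreal (f h) * indicator ?S \<tau> \<partial>config N t)"
    by (rule nn_integral_cmult_indicator[symmetric]) simp
  also have "\<dots> \<le> (\<integral>\<^sup>+\<tau>. f (\<tau> x) \<partial>config N t)"
  proof (intro nn_integral_mono)
    show "ennreal (f h) * indicator ?S \<tau> \<le> ennreal (f (\<tau> x))" for \<tau>
      using monoD[OF f_mono, of h "\<tau> x"] by (cases "h \<le> \<tau> x") (auto intro: ennreal_leI)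
  qed
  also have "\<dots> \<le> ennreal ((1 + c / real N) ^ t * f 0)"
    by (rule nn_integral_config_le[OF N])
  finally show ?thesis
    using c_nonneg f_nonneg by (subst (asm) ennreal_le_iff) auto
qed

end

lemma pochhammer_drift:
  "(pochhammer (real (Suc h) + 1) k - pochhammer (real h + 1) k) * (real h + 1)
     = real k * pochhammer (real h + 1) k"
  using mult_pochhammer_shift[of "real h + 1" k] by (simp add: algebra_simps)

lemma prob_config_column_ge_le:
  assumes N: "N \<ge> 1"
  shows "measure_pmf.prob (config N N) {\<tau>. 9 * k \<le> \<tau> x} \<le> exp (- real k)"
proof -
  let ?P = "measure_pmf.prob (config N N) {\<tau>. 9 * k \<le> \<tau> x}"
  let ?f = "\<lambda>h::nat. pochhammer (real h + 1) k :: real"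
  have f_mono: "mono ?f"
    by (intro monoI pochhammer_mono) auto
  have f_nonneg: "0 \<le> ?f h" for h
    by (intro pochhammer_nonneg) simp
  have f_drift: "(?f (Suc h) - ?f h) * (real h + 1) \<le> real k * ?f h" for h
    using pochhammer_drift[of h k] by simp
  have f_lower: "9 ^ k * real k ^ k \<le> ?f (9 * k)"
  proof -
    have "9 ^ k * real k ^ k = (9 * real k) ^ k"
      by (simp add: power_mult_distrib)
    also have "\<dots> \<le> (real (9 * k) + 1) ^ k"
      by (intro power_mono) auto
    also have "\<dots> \<le> ?f (9 * k)"
      by (rule power_le_pochhammer) simp
    finally show ?thesis .
  qed
  have f_0: "?f 0 \<le> real k ^ k"
    using fact_le_power[of k, where 'a = real] by (simp add: pochhammer_fact[symmetric])
  have exp_bound: "(1 + real k / real N) ^ N \<le> exp (real k)"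
    using N by (intro exp_ge_one_plus_x_over_n_power_n) auto
  have "?P * ?f (9 * k) \<le> (1 + real k / real N) ^ N * ?f 0"
    by (rule prob_config_tail_le[OF f_mono f_nonneg f_drift _ N]) simp
  also have "\<dots> \<le> exp (real k) * real k ^ k"
    using f_nonneg[of 0] by (intro mult_mono[OF exp_bound f_0]) auto
  finally have "?P * ?f (9 * k) \<le> exp (real k) * real k ^ k" .
  then have "?P * 9 ^ k * real k ^ k \<le> exp (real k) * real k ^ k"
    using mult_left_mono[OF f_lower, of ?P] by (simp add: mult.assoc)
  moreover have "0 < real k ^ k"
    by (cases k) auto
  ultimately have P_9k: "?P * 9 ^ k \<le> exp (real k)"
    by (simp only: mult_le_cancel_right_pos)
  \<comment> \<open>the factor 9 is chosen so that e^2 \<le> 9, i.e. (e/9)^k \<le> e^-k\<close>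
  have "exp (real k) * exp (real k) = (exp 1 * exp 1) ^ k"
    by (simp add: power_mult_distrib flip: exp_of_nat_mult)
  also have "\<dots> \<le> 9 ^ k"
    using mult_mono[OF exp_le exp_le] by (intro power_mono) auto
  finally have "?P * (exp (real k) * exp (real k)) \<le> exp (real k)"
    using P_9k mult_left_mono[of _ "9 ^ k" ?P] by (smt (verit) measure_nonneg)
  then have "?P * exp (real k) \<le> 1"
    by (simp add: mult.assoc[symmetric])
  then show ?thesis
    by (simp add: exp_minus inverse_eq_divide pos_le_divide_eq)
qed

lemma prob_max_height_ge_le:
  assumes N: "N \<ge> 1"
  shows "measure_pmf.prob (config N N) {\<sigma>. 9 * k \<le> max_height N \<sigma>} \<le> real N * exp (- real k)"
proof -
  have "{\<sigma>. 9 * k \<le> max_height N \<sigma>} \<subseteq> (\<Union>x\<in>{1..N}. {\<sigma>. 9 * k \<le> \<sigma> x})"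
  proof safe
    fix \<sigma> assume "9 * k \<le> max_height N \<sigma>"
    moreover have "max_height N \<sigma> \<in> \<sigma> ` {1..N}"
      unfolding max_height_def using N by (intro Max_in) auto
    ultimately show "\<sigma> \<in> (\<Union>x\<in>{1..N}. {\<sigma>. 9 * k \<le> \<sigma> x})" by auto
  qed
  then have "measure_pmf.prob (config N N) {\<sigma>. 9 * k \<le> max_height N \<sigma>}
      \<le> measure_pmf.prob (config N N) (\<Union>x\<in>{1..N}. {\<sigma>. 9 * k \<le> \<sigma> x})"
    by (intro measure_pmf.finite_measure_mono) auto
  also have "\<dots> \<le> (\<Sum>x\<in>{1..N}. measure_pmf.prob (config N N) {\<sigma>. 9 * k \<le> \<sigma> x})"
    by (rule measure_pmf.finite_measure_subadditive_finite) auto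
  also have "\<dots> \<le> (\<Sum>x\<in>{1..N}. exp (- real k))"
    using N by (intro sum_mono prob_config_column_ge_le)
  finally show ?thesis by simp
qed

lemma prob_max_height_le_ln:
  assumes N: "N \<ge> 2"
  shows "measure_pmf.prob (config N N) {\<sigma>. real (max_height N \<sigma>) \<le> 45 * ln (real N)}
           \<ge> 1 - inverse (real N ^ 2)"
proof -
  define k where "k = nat \<lceil>3 * ln (real N)\<rceil>"
  let ?good = "{\<sigma>. real (max_height N \<sigma>) \<le> 45 * ln (real N)}"
  have "ln 2 \<le> ln (real N)"
    using N by simp
  then have k_bounds: "3 * ln (real N) \<le> real k" "9 * real k \<le> 45 * ln (real N)"
    using ln2_ge_two_thirds unfolding k_def by linarith+
  then have "UNIV - ?good \<subseteq> {\<sigma>. 9 * k \<le> max_height N \<sigma>}"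
    by auto
  then have "measure_pmf.prob (config N N) (UNIV - ?good)
      \<le> measure_pmf.prob (config N N) {\<sigma>. 9 * k \<le> max_height N \<sigma>}"
    by (intro measure_pmf.finite_measure_mono) auto
  also have "\<dots> \<le> real N * exp (- real k)"
    using N by (intro prob_max_height_ge_le) simp
  also have "\<dots> \<le> real N * exp (- (3 * ln (real N)))"
    using k_bounds(1) by (intro mult_left_mono) auto
  also have "\<dots> = inverse (real N ^ 2)"
  proof -
    have "exp (3 * ln (real N)) = real N ^ 3"
      using exp_of_nat_mult[of 3 "ln (real N)"] N by simp
    then show ?thesis
      using N by (simp add: exp_minus power3_eq_cube power2_eq_square)
  qed
  finally show ?thesis
    using measure_pmf.prob_compl[of ?good "config N N"] by simp
qed

theorem theorem1p2:
  "\<exists>A::real. A > 0 \<and> (\<exists>\<epsilon>::nat \<Rightarrow> real. (\<forall>N. \<epsilon> N \<ge> 0) \<and> summable \<epsilon> \<and>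
     (\<forall>N\<ge>2. measure_pmf.prob (config N N)
               {\<sigma>. real (max_height N \<sigma>) \<le> A * ln (real N)} \<ge> 1 - \<epsilon> N))"
proof (intro exI conjI allI impI)
  show "(45::real) > 0" by simp
  show "inverse (real N ^ 2) \<ge> 0" for N by simp
  show "summable (\<lambda>N. inverse (real N ^ 2))"
    by (rule inverse_power_summable) simp
  show "measure_pmf.prob (config N N) {\<sigma>. real (max_height N \<sigma>) \<le> 45 * ln (real N)}
          \<ge> 1 - inverse (real N ^ 2)" if "N \<ge> 2" for N
    using that by (rule prob_max_height_le_ln)
qed

end
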